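(* Let $M$ be a matroid of rank $r$ on a finite linearly ordered set $E$. Then $\mathcal U^*(M)$ is an antichain (no member is properly contained in another).
   Context: The graded lexicographic order on $2^E$: $X\prec Y$ if $|X|<|Y|$, or $|X|=|Y|$ and $\min(X\triangle Y)\in X$; for nonempty $\mathcal X\subseteq 2^E$, $\min\mathcal X$ is its $\prec$-smallest member. A set $X$ is $k$-closed in $M$ if $\mathrm{cl}_M(Y)\subseteq X$ for all $Y\subseteq X$ with $|Y|\le k$; $\mathrm{cl}_k(X)$ is the intersection of all $k$-closed sets containing $X$ (for $k<0$ every set is $k$-closed, so $\mathrm{cl}_{-1}(X)=X$). For a flat $F$ of $M$ of rank $k$, $U^*_F=\min\{U : \mathrm{cl}_{k-1}(U)=F\}$. For $0\le k\le r-1$, $\mathcal U^*_k=\{U^*_F : F \text{ a flat of rank } k,\ |U^*_F|>k\}$, and $\mathcal U^*(M)=\bigcup_{k=0}^{r-1}\mathcal U^*_k$. *)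

theory Defs
  imports Main
begin

definition matroid :: "'a set \<Rightarrow> ('a set \<Rightarrow> bool) \<Rightarrow> bool" where
  "matroid E indep \<longleftrightarrow> finite E \<and> indep {} \<and> (\<forall>I. indep I \<longrightarrow> I \<subseteq> E)
     \<and> (\<forall>I J. indep J \<and> I \<subseteq> J \<longrightarrow> indep I)
     \<and> (\<forall>I J. indep I \<and> indep J \<and> card I < card J \<longrightarrow> (\<exists>e\<in>J - I. indep (insert e I)))"

definition mrank :: "('a set \<Rightarrow> bool) \<Rightarrow> 'a set \<Rightarrow> nat" where
  "mrank indep X = Max (card ` {I. I \<subseteq> X \<and> indep I})"

definition mcl :: "'a set \<Rightarrow> ('a set \<Rightarrow> bool) \<Rightarrow> 'a set \<Rightarrow> 'a set" where
  "mcl E indep X = {e \<in> E. mrank indep (insert e X) = mrank indep X}"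

definition flat :: "'a set \<Rightarrow> ('a set \<Rightarrow> bool) \<Rightarrow> 'a set \<Rightarrow> bool" where
  "flat E indep F \<longleftrightarrow> F \<subseteq> E \<and> mcl E indep F = F"

text \<open>X is k-closed: the closure of every subset of X of size at most k lies in X
  (for k < 0 every set is k-closed).\<close>
definition k_closed :: "'a set \<Rightarrow> ('a set \<Rightarrow> bool) \<Rightarrow> int \<Rightarrow> 'a set \<Rightarrow> bool" where
  "k_closed E indep k X \<longleftrightarrow> (\<forall>Y. Y \<subseteq> X \<and> int (card Y) \<le> k \<longrightarrow> mcl E indep Y \<subseteq> X)"

definition cl_k :: "'a set \<Rightarrow> ('a set \<Rightarrow> bool) \<Rightarrow> int \<Rightarrow> 'a set \<Rightarrow> 'a set" where
  "cl_k E indep k X = \<Inter> {Z. Z \<subseteq> E \<and> X \<subseteq> Z \<and> k_closed E indep k Z}"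

definition glex_less :: "'a::linorder set \<Rightarrow> 'a set \<Rightarrow> bool" where
  "glex_less X Y \<longleftrightarrow> card X < card Y \<or>
     (card X = card Y \<and> X \<noteq> Y \<and> Min ((X - Y) \<union> (Y - X)) \<in> X)"

definition glex_min :: "'a::linorder set set \<Rightarrow> 'a set" where
  "glex_min \<X> = (THE U. U \<in> \<X> \<and> (\<forall>V\<in>\<X>. V \<noteq> U \<longrightarrow> glex_less U V))"

definition Ustar :: "'a::linorder set \<Rightarrow> ('a set \<Rightarrow> bool) \<Rightarrow> 'a set \<Rightarrow> 'a set" where
  "Ustar E indep F =
     glex_min {U. U \<subseteq> E \<and> cl_k E indep (int (mrank indep F) - 1) U = F}"

definition Ustar_k :: "'a::linorder set \<Rightarrow> ('a set \<Rightarrow> bool) \<Rightarrow> nat \<Rightarrow> 'a set set" where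
  "Ustar_k E indep k = {Ustar E indep F | F. flat E indep F \<and> mrank indep F = k
                          \<and> card (Ustar E indep F) > k}"

definition Ustar_all :: "'a::linorder set \<Rightarrow> ('a set \<Rightarrow> bool) \<Rightarrow> 'a set set" where
  "Ustar_all E indep = (\<Union>k\<in>{0..<mrank indep E}. Ustar_k E indep k)"

end

theory Submission
  imports Defs
begin

text \<open>
  Let \<open>A = U*\<^sub>F \<subseteq> B = U*\<^sub>G\<close> with \<open>rk F = k\<close>, \<open>rk G = l\<close>, \<open>|A| > k\<close>, \<open>|B| > l\<close>.
  The tool is that \<open>cl\<^sub>j(V) = cl\<^sub>j(U)\<close> whenever \<open>V \<subseteq> U\<close> and all of \<open>U - V\<close> lies in the matroid
  closure of some \<open>Y \<subseteq> V\<close> with \<open>|Y| \<le> j\<close>. If \<open>rk A < k\<close>, a basis \<open>I\<close> of \<open>A\<close> would have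
  \<open>cl\<^sub>k\<^sub>-\<^sub>1(I) = F\<close> and \<open>|I| < |A|\<close>, against the minimality of \<open>A\<close>; so \<open>rk A = k \<le> l\<close>.
  If \<open>k < l\<close>, an element \<open>x \<in> A - I\<close> lies in the closure of \<open>I \<subseteq> B - {x}\<close> with \<open>|I| \<le> l - 1\<close>,
  so \<open>B - {x}\<close> still generates \<open>G\<close>, against the minimality of \<open>B\<close>. Hence \<open>k = l\<close>; then \<open>G\<close>
  is \<open>(k-1)\<close>-closed and contains \<open>A\<close>, so \<open>F \<subseteq> G\<close>, and flats of equal rank that are nested
  coincide.
\<close>

section \<open>The graded lexicographic order\<close>

lemma glex_less_card_le: "glex_less X Y \<Longrightarrow> card X \<le> card Y"
  unfolding glex_less_def by auto

lemma Min_symdiff_in_iff: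
  fixes X Y :: "'a::linorder set"
  assumes "finite X" "finite Y" "X \<noteq> Y"
  shows "Min ((X - Y) \<union> (Y - X)) \<in> X \<longleftrightarrow> (\<exists>a\<in>X - Y. \<forall>x<a. x \<in> X \<longleftrightarrow> x \<in> Y)"
proof -
  let ?D = "(X - Y) \<union> (Y - X)"
  have fin: "finite ?D" and ne: "?D \<noteq> {}" using assms by auto
  have below_Min: "x \<in> X \<longleftrightarrow> x \<in> Y" if "x < Min ?D" for x
  proof -
    have "x \<notin> ?D"
    proof
      assume "x \<in> ?D"
      then have "Min ?D \<le> x" by (rule Min_le[OF fin])
      with that show False by simp
    qed
    then show ?thesis by blast
  qed
  show ?thesis
  proof
    assume "Min ?D \<in> X"
    then show "\<exists>a\<in>X - Y. \<forall>x<a. x \<in> X \<longleftrightarrow> x \<in> Y"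
      using Min_in[OF fin ne] below_Min by (intro bexI[of _ "Min ?D"]) auto
  next
    assume "\<exists>a\<in>X - Y. \<forall>x<a. x \<in> X \<longleftrightarrow> x \<in> Y"
    then obtain a where a: "a \<in> X" "a \<notin> Y" "\<forall>x<a. x \<in> X \<longleftrightarrow> x \<in> Y" by auto
    have "Min ?D \<le> a" using a Min_le[OF fin] by auto
    moreover have "\<not> Min ?D < a" using a(3) Min_in[OF fin ne] by blast
    ultimately show "Min ?D \<in> X" using a by auto
  qed
qed

lemma glex_less_asym:
  fixes X Y :: "'a::linorder set"
  assumes "finite X" "finite Y" "glex_less X Y"
  shows "\<not> glex_less Y X"
proof
  assume YX: "glex_less Y X"
  let ?D = "(X - Y) \<union> (Y - X)"
  have sym: "(Y - X) \<union> (X - Y) = ?D" by blast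
  have "card X = card Y" using glex_less_card_le[OF YX] glex_less_card_le[OF assms(3)] by simp
  then have "X \<noteq> Y" "Min ?D \<in> X" "Min ?D \<in> Y"
    using assms(3) YX unfolding glex_less_def sym by simp_all
  moreover have "Min ?D \<in> ?D" using assms \<open>X \<noteq> Y\<close> by (intro Min_in) auto
  ultimately show False by auto
qed

lemma glex_less_total:
  fixes X Y :: "'a::linorder set"
  assumes "finite X" "finite Y" "X \<noteq> Y"
  shows "glex_less X Y \<or> glex_less Y X"
proof -
  let ?D = "(X - Y) \<union> (Y - X)"
  have sym: "(Y - X) \<union> (X - Y) = ?D" by blast
  have "Min ?D \<in> ?D" using assms by (intro Min_in) auto
  then have "Min ?D \<in> X \<or> Min ?D \<in> Y" by blast
  then show ?thesis using assms(3) unfolding glex_less_def sym by (metis linorder_neqE_nat)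
qed

lemma glex_less_trans:
  fixes X Y Z :: "'a::linorder set"
  assumes fin: "finite X" "finite Y" "finite Z" and XY: "glex_less X Y" and YZ: "glex_less Y Z"
  shows "glex_less X Z"
proof (cases "card X < card Z")
  case True
  then show ?thesis unfolding glex_less_def by auto
next
  case False
  then have card: "card X = card Y" "card Y = card Z"
    using glex_less_card_le[OF XY] glex_less_card_le[OF YZ] by auto
  then have "X \<noteq> Y" "Y \<noteq> Z" using XY YZ unfolding glex_less_def by auto
  obtain a where a: "a \<in> X" "a \<notin> Y" "\<forall>x<a. x \<in> X \<longleftrightarrow> x \<in> Y"
    using XY card Min_symdiff_in_iff[OF fin(1,2) \<open>X \<noteq> Y\<close>] unfolding glex_less_def by auto
  obtain b where b: "b \<in> Y" "b \<notin> Z" "\<forall>x<b. x \<in> Y \<longleftrightarrow> x \<in> Z"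
    using YZ card Min_symdiff_in_iff[OF fin(2,3) \<open>Y \<noteq> Z\<close>] unfolding glex_less_def by auto
  have "a \<noteq> b" using a b by auto
  then consider "a < b" | "b < a" by fastforce
  then have "\<exists>d\<in>X - Z. \<forall>x<d. x \<in> X \<longleftrightarrow> x \<in> Z"
  proof cases
    case 1
    then show ?thesis using a b by (intro bexI[of _ a]) auto
  next
    case 2
    then show ?thesis using a b by (intro bexI[of _ b]) auto
  qed
  moreover from this have "X \<noteq> Z" by blast
  ultimately have "Min ((X - Z) \<union> (Z - X)) \<in> X"
    using Min_symdiff_in_iff[OF fin(1,3)] by blast
  then show ?thesis using card \<open>X \<noteq> Z\<close> unfolding glex_less_def by simp
qed

lemma glex_least_exists:
  fixes \<X> :: "'a::linorder set set"
  assumes "finite \<X>" "\<X> \<noteq> {}" "\<forall>X\<in>\<X>. finite X"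
  shows "\<exists>U\<in>\<X>. \<forall>V\<in>\<X>. V \<noteq> U \<longrightarrow> glex_less U V"
  using assms
proof (induction \<X> rule: finite_ne_induct)
  case (singleton X)
  then show ?case by auto
next
  case (insert X \<X>)
  then obtain U where U: "U \<in> \<X>" "\<forall>V\<in>\<X>. V \<noteq> U \<longrightarrow> glex_less U V" by auto
  have fin: "finite X" "finite U" using insert U by auto
  show ?case
  proof (cases "glex_less X U")
    case True
    have "glex_less X V" if "V \<in> \<X>" for V
    proof (cases "V = U")
      case True
      then show ?thesis using \<open>glex_less X U\<close> by simp
    next
      case False
      then have "glex_less U V" using U that by blast
      moreover have "finite V" using insert.prems that by blast
      ultimately show ?thesis using glex_less_trans[OF fin] \<open>glex_less X U\<close> by blast
    qed
    then show ?thesis by blast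
  next
    case False
    moreover have "X \<noteq> U" using insert.hyps U(1) by blast
    ultimately have "glex_less U X" using glex_less_total[OF fin] by blast
    then show ?thesis using U by blast
  qed
qed

lemma glex_min:
  fixes \<X> :: "'a::linorder set set"
  assumes "finite \<X>" "\<X> \<noteq> {}" "\<forall>X\<in>\<X>. finite X"
  shows "glex_min \<X> \<in> \<X>" and "\<And>V. V \<in> \<X> \<Longrightarrow> card (glex_min \<X>) \<le> card V"
proof -
  let ?least = "\<lambda>U. U \<in> \<X> \<and> (\<forall>V\<in>\<X>. V \<noteq> U \<longrightarrow> glex_less U V)"
  obtain U where U: "?least U" using glex_least_exists[OF assms] by blast
  have "W = U" if W: "?least W" for W
  proof (rule ccontr)
    assume "W \<noteq> U"
    then have "glex_less W U" "glex_less U W" using U W by blast+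
    moreover have "finite W" "finite U" using U W assms(3) by blast+
    ultimately show False using glex_less_asym by blast
  qed
  then have least: "?least (glex_min \<X>)"
    unfolding glex_min_def using U by (rule theI[of ?least U, rotated])
  then show "glex_min \<X> \<in> \<X>" by blast
  show "card (glex_min \<X>) \<le> card V" if "V \<in> \<X>" for V
  proof (cases "V = glex_min \<X>")
    case False
    then show ?thesis using least that glex_less_card_le by blast
  qed simp
qed

section \<open>Rank, closure and flats\<close>

context
  fixes E :: "'a set" and indep :: "'a set \<Rightarrow> bool"
  assumes M: "matroid E indep"
begin

lemma finite_ground: "finite E"
  using M unfolding matroid_def by blast

lemma indep_empty: "indep {}"
  using M unfolding matroid_def by blast

lemma indep_subset_ground: "indep I \<Longrightarrow> I \<subseteq> E"
  using M unfolding matroid_def by blast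

lemma indep_subset: "indep J \<Longrightarrow> I \<subseteq> J \<Longrightarrow> indep I"
  using M unfolding matroid_def by blast

lemma indep_augment: "indep I \<Longrightarrow> indep J \<Longrightarrow> card I < card J \<Longrightarrow> \<exists>e\<in>J - I. indep (insert e I)"
  using M unfolding matroid_def by blast

lemma finite_subset_ground: "X \<subseteq> E \<Longrightarrow> finite X"
  using finite_ground finite_subset by blast

lemma finite_indep_card_image: "X \<subseteq> E \<Longrightarrow> finite (card ` {I. I \<subseteq> X \<and> indep I})"
  using finite_subset_ground by (simp add: finite_Collect_subsets)

lemma card_le_mrank: "X \<subseteq> E \<Longrightarrow> indep I \<Longrightarrow> I \<subseteq> X \<Longrightarrow> card I \<le> mrank indep X"
  unfolding mrank_def by (rule Max_ge[OF finite_indep_card_image]) auto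

lemma obtain_basis:
  assumes "X \<subseteq> E"
  obtains I where "I \<subseteq> X" "indep I" "card I = mrank indep X"
proof -
  have "mrank indep X \<in> card ` {I. I \<subseteq> X \<and> indep I}"
    unfolding mrank_def using finite_indep_card_image[OF assms] indep_empty by (intro Max_in) auto
  then show ?thesis using that by auto
qed

lemma mrank_mono:
  assumes "X \<subseteq> Y" "Y \<subseteq> E"
  shows "mrank indep X \<le> mrank indep Y"
proof -
  obtain I where I: "I \<subseteq> X" "indep I" "card I = mrank indep X"
    using obtain_basis[OF order_trans[OF assms]] .
  have "card I \<le> mrank indep Y" using card_le_mrank[OF assms(2) I(2)] I(1) assms(1) by blast
  then show ?thesis using I(3) by simp
qed

lemma mrank_indep:
  assumes "indep I"
  shows "mrank indep I = card I"
proof -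
  have IE: "I \<subseteq> E" using indep_subset_ground[OF assms] .
  obtain J where "J \<subseteq> I" "indep J" "card J = mrank indep I" using obtain_basis[OF IE] .
  then have "mrank indep I \<le> card I" using card_mono[OF finite_subset_ground[OF IE]] by metis
  moreover have "card I \<le> mrank indep I" using card_le_mrank[OF IE assms] by simp
  ultimately show ?thesis by simp
qed

lemma extend_to_basis:
  assumes "indep I" "I \<subseteq> X" "X \<subseteq> E"
  obtains K where "I \<subseteq> K" "K \<subseteq> X" "indep K" "card K = mrank indep X"
proof -
  let ?S = "{K. I \<subseteq> K \<and> K \<subseteq> X \<and> indep K}"
  have fin: "finite (card ` ?S)"
    using finite_subset_ground[OF assms(3)] by (simp add: finite_Collect_subsets)
  have "card ` ?S \<noteq> {}" using assms by blast
  from Max_in[OF fin this] obtain K where cardK: "Max (card ` ?S) = card K" and "K \<in> ?S"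
    by (rule imageE)
  then have K: "I \<subseteq> K" "K \<subseteq> X" "indep K" by simp_all
  have maximal: "card K' \<le> card K" if "K' \<in> ?S" for K'
    using Max_ge[OF fin] that cardK by simp
  obtain B where B: "B \<subseteq> X" "indep B" "card B = mrank indep X" using obtain_basis[OF assms(3)] .
  have "\<not> card K < mrank indep X"
  proof
    assume "card K < mrank indep X"
    then obtain z where z: "z \<in> B - K" "indep (insert z K)"
      using indep_augment[OF K(3) B(2)] B(3) by auto
    then have "insert z K \<in> ?S" using K B(1) by blast
    then have "card (insert z K) \<le> card K" by (rule maximal)
    moreover have "finite K" using finite_subset_ground K(2) assms(3) by blast
    then have "card (insert z K) = card K + 1" using z(1) by simp
    ultimately show False by linarith
  qed
  moreover have "card K \<le> mrank indep X" using card_le_mrank[OF assms(3) K(3,2)] .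
  ultimately show ?thesis using that K by simp
qed

lemma basis_spans:
  assumes "U \<subseteq> E" "I \<subseteq> U" "indep I" "card I = mrank indep U" "x \<in> U"
  shows "x \<in> mcl E indep I"
proof -
  have xIU: "insert x I \<subseteq> U" using assms(2,5) by blast
  have "mrank indep I \<le> mrank indep (insert x I)"
    using mrank_mono[OF subset_insertI order_trans[OF xIU assms(1)]] .
  moreover have "mrank indep (insert x I) \<le> mrank indep U" using mrank_mono[OF xIU assms(1)] .
  ultimately have "mrank indep (insert x I) = mrank indep I"
    using mrank_indep[OF assms(3)] assms(4) by simp
  then show ?thesis using assms(1,5) unfolding mcl_def by blast
qed

lemma indep_insert_of_notin_mcl:
  assumes "X \<subseteq> E" "K \<subseteq> X" "indep K" "card K = mrank indep X" "e \<in> E" "e \<notin> mcl E indep X"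
  shows "indep (insert e K)"
proof -
  have eX: "insert e X \<subseteq> E" using assms(1,5) by blast
  have "mrank indep X \<noteq> mrank indep (insert e X)" using assms(5,6) unfolding mcl_def by simp
  then have less: "card K < mrank indep (insert e X)"
    using mrank_mono[OF subset_insertI eX] assms(4) by simp
  obtain L where L: "L \<subseteq> insert e X" "indep L" "card L = mrank indep (insert e X)"
    using obtain_basis[OF eX] .
  obtain z where z: "z \<in> L - K" "indep (insert z K)"
    using indep_augment[OF assms(3) L(2)] less L(3) by auto
  have "z \<notin> X"
  proof
    assume "z \<in> X"
    then have "card (insert z K) \<le> mrank indep X"
      using card_le_mrank[OF assms(1) z(2)] assms(2) by blast
    moreover have "finite K" using finite_subset_ground assms(1,2) by blast
    then have "card (insert z K) = card K + 1" using z(1) by simp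
    ultimately show False using assms(4) by linarith
  qed
  then show ?thesis using z L(1) by auto
qed

lemma not_indep_insert_of_mcl:
  assumes "Y \<subseteq> E" "I \<subseteq> Y" "indep I" "card I = mrank indep Y" "e \<in> mcl E indep Y" "e \<notin> Y"
  shows "\<not> indep (insert e I)"
proof
  assume indep_eI: "indep (insert e I)"
  have "insert e Y \<subseteq> E" using assms(1,5) unfolding mcl_def by blast
  then have "card (insert e I) \<le> mrank indep (insert e Y)"
    using card_le_mrank[OF _ indep_eI] assms(2) by blast
  moreover have "finite I" "e \<notin> I" using assms finite_subset_ground by auto
  then have "card (insert e I) = card I + 1" by simp
  ultimately show False using assms(4,5) unfolding mcl_def by simp
qed

lemma mcl_mono:
  assumes "Y \<subseteq> X" "X \<subseteq> E"
  shows "mcl E indep Y \<subseteq> mcl E indep X"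
proof
  fix e assume e: "e \<in> mcl E indep Y"
  then have "e \<in> E" unfolding mcl_def by blast
  show "e \<in> mcl E indep X"
  proof (cases "e \<in> X")
    case True
    then show ?thesis using \<open>e \<in> E\<close> by (simp add: mcl_def insert_absorb)
  next
    case False
    have YE: "Y \<subseteq> E" using assms by blast
    obtain I where I: "I \<subseteq> Y" "indep I" "card I = mrank indep Y" using obtain_basis[OF YE] .
    obtain K where K: "I \<subseteq> K" "K \<subseteq> X" "indep K" "card K = mrank indep X"
      using extend_to_basis[OF I(2) _ assms(2)] I(1) assms(1) by blast
    have "\<not> indep (insert e I)"
      using not_indep_insert_of_mcl[OF YE I e] False assms(1) by blast
    then have "\<not> indep (insert e K)" using indep_subset K(1) by blast
    then show ?thesis using indep_insert_of_notin_mcl[OF assms(2) K(2-4) \<open>e \<in> E\<close>] by blast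
  qed
qed

lemma mcl_subset_flat: "flat E indep F \<Longrightarrow> Y \<subseteq> F \<Longrightarrow> mcl E indep Y \<subseteq> F"
  using mcl_mono unfolding flat_def by metis

lemma flat_eq_of_subset_mrank_eq:
  assumes "flat E indep F" "flat E indep G" "F \<subseteq> G" "mrank indep F = mrank indep G"
  shows "F = G"
proof (rule ccontr)
  assume "F \<noteq> G"
  then obtain g where g: "g \<in> G" "g \<notin> F" using assms(3) by blast
  have GE: "G \<subseteq> E" using assms(2) unfolding flat_def by blast
  have "mrank indep (insert g F) \<noteq> mrank indep F"
    using assms(1) g GE unfolding flat_def mcl_def by auto
  moreover have "insert g F \<subseteq> G" using g assms(3) by blast
  then have "mrank indep F \<le> mrank indep (insert g F)"
    and "mrank indep (insert g F) \<le> mrank indep G"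
    using mrank_mono GE by (blast, blast)
  ultimately show False using assms(4) by linarith
qed

end

section \<open>The operators \<open>cl\<^sub>j\<close>\<close>

lemma subset_cl_k: "U \<subseteq> E \<Longrightarrow> U \<subseteq> cl_k E indep j U"
  unfolding cl_k_def by blast

lemma cl_k_least: "Z \<subseteq> E \<Longrightarrow> U \<subseteq> Z \<Longrightarrow> k_closed E indep j Z \<Longrightarrow> cl_k E indep j U \<subseteq> Z"
  unfolding cl_k_def by blast

lemma k_closed_cl_k: "k_closed E indep j (cl_k E indep j U)"
  unfolding cl_k_def k_closed_def by blast

lemma cl_k_eq_if_spanned:
  assumes "V \<subseteq> U" "Y \<subseteq> V" "int (card Y) \<le> j" "U - V \<subseteq> mcl E indep Y"
  shows "cl_k E indep j V = cl_k E indep j U"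
proof -
  have "U \<subseteq> Z" if "V \<subseteq> Z" "k_closed E indep j Z" for Z
  proof -
    have "mcl E indep Y \<subseteq> Z" using that assms(2,3) unfolding k_closed_def by blast
    then show ?thesis using that(1) assms(4) by blast
  qed
  then have "{Z. Z \<subseteq> E \<and> V \<subseteq> Z \<and> k_closed E indep j Z} = {Z. Z \<subseteq> E \<and> U \<subseteq> Z \<and> k_closed E indep j Z}"
    using assms(1) by blast
  then show ?thesis unfolding cl_k_def by simp
qed

section \<open>The sets \<open>U*\<^sub>F\<close>\<close>

lemma
  fixes E :: "'a::linorder set"
  assumes M: "matroid E indep" and F: "flat E indep F"
  shows Ustar_subset_ground: "Ustar E indep F \<subseteq> E"
    and cl_k_Ustar: "cl_k E indep (int (mrank indep F) - 1) (Ustar E indep F) = F"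
    and card_Ustar_le:
      "\<And>V. V \<subseteq> E \<Longrightarrow> cl_k E indep (int (mrank indep F) - 1) V = F \<Longrightarrow> card (Ustar E indep F) \<le> card V"
proof -
  let ?j = "int (mrank indep F) - 1"
  let ?\<X> = "{U. U \<subseteq> E \<and> cl_k E indep ?j U = F}"
  have FE: "F \<subseteq> E" using F unfolding flat_def by blast
  have "k_closed E indep ?j F" using mcl_subset_flat[OF M F] unfolding k_closed_def by blast
  then have "cl_k E indep ?j F = F"
    using subset_cl_k[OF FE, of indep ?j] cl_k_least[OF FE subset_refl] by blast
  then have "?\<X> \<noteq> {}" using FE by blast
  moreover have "finite ?\<X>" using finite_ground[OF M] by (simp add: finite_Collect_subsets)
  moreover have "\<forall>X\<in>?\<X>. finite X" using finite_subset_ground[OF M] by blast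
  ultimately have "glex_min ?\<X> \<in> ?\<X>" "\<And>V. V \<in> ?\<X> \<Longrightarrow> card (glex_min ?\<X>) \<le> card V"
    using glex_min by blast+
  then show "Ustar E indep F \<subseteq> E" "cl_k E indep ?j (Ustar E indep F) = F"
    "\<And>V. V \<subseteq> E \<Longrightarrow> cl_k E indep ?j V = F \<Longrightarrow> card (Ustar E indep F) \<le> card V"
    unfolding Ustar_def by simp_all
qed

lemma Ustar_subset_flat:
  fixes E :: "'a::linorder set"
  assumes "matroid E indep" "flat E indep F"
  shows "Ustar E indep F \<subseteq> F"
  using subset_cl_k[OF Ustar_subset_ground[OF assms], of indep "int (mrank indep F) - 1"] cl_k_Ustar[OF assms] by simp

lemma mrank_Ustar:
  fixes E :: "'a::linorder set"
  assumes M: "matroid E indep" and F: "flat E indep F"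
    and big: "card (Ustar E indep F) > mrank indep F"
  shows "mrank indep (Ustar E indep F) = mrank indep F"
proof -
  let ?A = "Ustar E indep F" and ?k = "mrank indep F"
  have AE: "?A \<subseteq> E" using Ustar_subset_ground[OF M F] .
  obtain I where I: "I \<subseteq> ?A" "indep I" "card I = mrank indep ?A"
    using obtain_basis[OF M AE] .
  have FE: "F \<subseteq> E" using F unfolding flat_def by blast
  have "mrank indep ?A \<le> ?k" using mrank_mono[OF M Ustar_subset_flat[OF M F] FE] .
  moreover have "\<not> mrank indep ?A < ?k"
  proof
    assume "mrank indep ?A < ?k"
    then have "int (card I) \<le> int ?k - 1" using I(3) by linarith
    moreover have "?A - I \<subseteq> mcl E indep I" using basis_spans[OF M AE I] by blast
    ultimately have "cl_k E indep (int ?k - 1) I = cl_k E indep (int ?k - 1) ?A"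
      using cl_k_eq_if_spanned[OF I(1) subset_refl] by blast
    moreover have "I \<subseteq> E" using I(1) AE by blast
    ultimately have "card ?A \<le> card I" using card_Ustar_le[OF M F] cl_k_Ustar[OF M F] by simp
    then show False using \<open>mrank indep ?A < ?k\<close> I(3) big by linarith
  qed
  ultimately show ?thesis by linarith
qed

lemma mrank_eq_of_Ustar_subset:
  fixes E :: "'a::linorder set"
  assumes M: "matroid E indep" and F: "flat E indep F" and G: "flat E indep G"
    and bigF: "card (Ustar E indep F) > mrank indep F"
    and bigG: "card (Ustar E indep G) > mrank indep G"
    and sub: "Ustar E indep F \<subseteq> Ustar E indep G"
  shows "mrank indep F = mrank indep G"
proof -
  let ?A = "Ustar E indep F" and ?B = "Ustar E indep G"
  let ?k = "mrank indep F" and ?l = "mrank indep G"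
  have AE: "?A \<subseteq> E" and BE: "?B \<subseteq> E"
    using Ustar_subset_ground[OF M F] Ustar_subset_ground[OF M G] .
  have GE: "G \<subseteq> E" using G unfolding flat_def by blast
  obtain I where I: "I \<subseteq> ?A" "indep I" "card I = mrank indep ?A"
    using obtain_basis[OF M AE] .
  have rkA: "mrank indep ?A = ?k" using mrank_Ustar[OF M F bigF] .
  have "?A \<subseteq> G" using sub Ustar_subset_flat[OF M G] by blast
  then have "?k \<le> ?l" using mrank_mono[OF M _ GE] rkA by metis
  moreover have "\<not> ?k < ?l"
  proof
    assume "?k < ?l"
    have "\<not> ?A \<subseteq> I"
    proof
      assume "?A \<subseteq> I"
      then have "I = ?A" using I(1) by blast
      then show False using I(3) rkA bigF by simp
    qed
    then obtain x where x: "x \<in> ?A" "x \<notin> I" by blast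
    have "?B - (?B - {x}) \<subseteq> mcl E indep I" using basis_spans[OF M AE I x(1)] by blast
    moreover have "I \<subseteq> ?B - {x}" using I(1) x(2) sub by blast
    moreover have "int (card I) \<le> int ?l - 1" using I(3) rkA \<open>?k < ?l\<close> by linarith
    ultimately have "cl_k E indep (int ?l - 1) (?B - {x}) = cl_k E indep (int ?l - 1) ?B"
      using cl_k_eq_if_spanned[OF Diff_subset] by blast
    moreover have "?B - {x} \<subseteq> E" using BE by blast
    ultimately have "card ?B \<le> card (?B - {x})" using card_Ustar_le[OF M G] cl_k_Ustar[OF M G] by simp
    moreover have "card (?B - {x}) < card ?B"
      using card_Diff1_less[OF finite_subset_ground[OF M BE]] x sub by blast
    ultimately show False by linarith
  qed
  ultimately show ?thesis by linarith
qed

lemma Ustar_eq_of_subset: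
  fixes E :: "'a::linorder set"
  assumes M: "matroid E indep" and F: "flat E indep F" and G: "flat E indep G"
    and bigF: "card (Ustar E indep F) > mrank indep F"
    and bigG: "card (Ustar E indep G) > mrank indep G"
    and sub: "Ustar E indep F \<subseteq> Ustar E indep G"
  shows "Ustar E indep F = Ustar E indep G"
proof -
  let ?j = "int (mrank indep F) - 1"
  have rk: "mrank indep F = mrank indep G" using mrank_eq_of_Ustar_subset[OF assms] .
  have GE: "G \<subseteq> E" using G unfolding flat_def by blast
  have "k_closed E indep ?j G"
    using k_closed_cl_k[of E indep ?j "Ustar E indep G"] cl_k_Ustar[OF M G] rk by simp
  moreover have "Ustar E indep F \<subseteq> G" using sub Ustar_subset_flat[OF M G] by blast
  ultimately have "cl_k E indep ?j (Ustar E indep F) \<subseteq> G" using cl_k_least[OF GE] by blast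
  then have "F \<subseteq> G" using cl_k_Ustar[OF M F] by simp
  then show ?thesis using flat_eq_of_subset_mrank_eq[OF M F G _ rk] by simp
qed

theorem lemma5p2:
  fixes E :: "'a::linorder set" and indep :: "'a set \<Rightarrow> bool"
  assumes "matroid E indep"
  shows "\<forall>A\<in>Ustar_all E indep. \<forall>B\<in>Ustar_all E indep. A \<subseteq> B \<longrightarrow> A = B"
proof (intro ballI impI)
  fix A B
  assume "A \<in> Ustar_all E indep" "B \<in> Ustar_all E indep" "A \<subseteq> B"
  then obtain F G where "flat E indep F" "A = Ustar E indep F" "card A > mrank indep F"
    and "flat E indep G" "B = Ustar E indep G" "card B > mrank indep G"
    unfolding Ustar_all_def Ustar_k_def by blast
  then show "A = B" using Ustar_eq_of_subset[OF assms, of F G] \<open>A \<subseteq> B\<close> by simp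
qed

end
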